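(* Let $D$ be an $m\times m$ differential matrix over a field $\mathbb F$ that is block-superdiagonal with respect to a partition of $\{1,\dots,m\}$ into consecutive intervals $I_1,\dots,I_k$ (in increasing order). Then there exist a nondegenerate filtered complex over $\mathbb F$ and an adapted basis of it, in which the basis elements indexed by $I_j$ have degree $j$ for each $j$, such that the matrix of the colimit boundary with respect to this adapted basis is $D$.
   Context: A differential matrix is a square matrix $D$ with $D^2=0$. It is block-superdiagonal with respect to the partition $I_1,\dots,I_k$ if $D_{ab}=0$ whenever $a\in I_i$, $b\in I_j$ with $j\ne i+1$. A complex is a family $(V_n,\partial_n)_{n\in\mathbb Z}$ of finite-dimensional $\mathbb F$-vector spaces with $\partial_n:V_n\to V_{n-1}$, $\partial_{n-1}\partial_n=0$, all but finitely many $\partial_n$ isomorphisms. A filtered complex is a family of complexes $({}_pV_\bullet)_{p\in\mathbb Z}$ with each ${}_pV_\bullet$ a subcomplex of ${}_{p+1}V_\bullet$, ${}_pV_\bullet=0$ for $p$ sufficiently small, and ${}_pV_\bullet={}_{p+1}V_\bullet$ for all but finitely many $p$; its colimit $V_\bullet$ is ${}_pV_\bullet$ for large $p$; $V=\bigoplus_nV_n$ and the colimit boundary is $\partial=\bigoplus_n\partial_n:V\to V$. A vector has pure degree $n$ if it lies in $V_n$; the level of a nonzero $v\in V_n$ is the least $p$ with $v\in{}_pV_n$. An adapted basis is a basis of $V$ such that (i) every element has pure degree; (ii) for all $n,p$, ${}_pV_n$ is spanned by the basis elements of degree $n$ and level $\le p$; (iii) the basis is ordered so that degree is nondecreasing and,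 within each degree, level is nondecreasing. The filtered complex is nondegenerate if $\dim{}_{p+1}V_n\le\dim{}_pV_n+1$ for all $p,n$. The matrix of $\partial$ has as column $j$ the coordinates of $\partial$ applied to the $j$-th basis element. *)

theory Defs
  imports Complex_Main "HOL-Library.Function_Algebras"
begin

text \<open>Ambient vector space: F^N, i.e. functions nat => F with pointwise scaling.
  All spaces V_n of the filtered complexes we construct are subspaces of this
  ambient space; the V_n (for different n) are required to be independent,
  so that V = (direct sum of the V_n) is their internal direct sum.\<close>

definition fscale :: "'a::field \<Rightarrow> (nat \<Rightarrow> 'a) \<Rightarrow> (nat \<Rightarrow> 'a)" where
  "fscale c f = (\<lambda>i. c * f i)"

lemma vector_space_fscale: "vector_space (fscale :: 'a::field \<Rightarrow> _)"
  by unfold_locales (simp_all add: fscale_def algebra_simps fun_eq_iff plus_fun_def)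

definition is_complex ::
  "('a::field \<Rightarrow> 'v::ab_group_add \<Rightarrow> 'v) \<Rightarrow> (int \<Rightarrow> 'v set) \<Rightarrow> (int \<Rightarrow> 'v \<Rightarrow> 'v) \<Rightarrow> bool" where
  "is_complex sc V d \<longleftrightarrow>
     (\<forall>n. module.subspace sc (V n)) \<and>
     (\<forall>n. \<exists>B. finite B \<and> B \<subseteq> V n \<and> module.span sc B = V n) \<and>
     (\<forall>n. \<forall>x\<in>V n. d n x \<in> V (n - 1)) \<and>
     (\<forall>n. \<forall>x\<in>V n. \<forall>y\<in>V n. d n (x + y) = d n x + d n y) \<and>
     (\<forall>n. \<forall>c. \<forall>x\<in>V n. d n (sc c x) = sc c (d n x)) \<and>
     (\<forall>n. \<forall>x\<in>V n. d (n - 1) (d n x) = 0) \<and>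
     finite {n. \<not> bij_betw (d n) (V n) (V (n - 1))}"

text \<open>Colimit of a filtered complex: FV p n is the space {}_pV_n.  Since the
  filtration is increasing and eventually constant, the colimit in degree n is
  the union over p (= FV p n for p large).\<close>

definition colim :: "(int \<Rightarrow> int \<Rightarrow> 'v set) \<Rightarrow> int \<Rightarrow> 'v set" where
  "colim FV n = (\<Union>p. FV p n)"

text \<open>The total space V = direct sum of the V_n (realised as an internal sum).\<close>

definition total_space ::
  "('a::field \<Rightarrow> 'v::ab_group_add \<Rightarrow> 'v) \<Rightarrow> (int \<Rightarrow> int \<Rightarrow> 'v set) \<Rightarrow> 'v set" where
  "total_space sc FV = module.span sc (\<Union>n. colim FV n)"

text \<open>All the complexes FV p share the boundary maps d, which
  expresses that each FV p is a subcomplex of FV (p+1).  We also require the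
  degree-n colimit spaces to be independent, so that their sum is direct.\<close>

definition filtered_complex ::
  "('a::field \<Rightarrow> 'v::ab_group_add \<Rightarrow> 'v) \<Rightarrow> (int \<Rightarrow> int \<Rightarrow> 'v set) \<Rightarrow> (int \<Rightarrow> 'v \<Rightarrow> 'v) \<Rightarrow> bool" where
  "filtered_complex sc FV d \<longleftrightarrow>
     (\<forall>p. is_complex sc (FV p) d) \<and>
     (\<forall>p n. FV p n \<subseteq> FV (p + 1) n) \<and>
     (\<exists>p0. \<forall>p\<le>p0. \<forall>n. FV p n = {0}) \<and>
     finite {p. FV p \<noteq> FV (p + 1)} \<and>
     (\<forall>N x. finite N \<longrightarrow> (\<forall>n\<in>N. x n \<in> colim FV n) \<longrightarrow>
        (\<Sum>n\<in>N. x n) = 0 \<longrightarrow> (\<forall>n\<in>N. x n = 0))"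

definition nondegenerate ::
  "('a::field \<Rightarrow> 'v::ab_group_add \<Rightarrow> 'v) \<Rightarrow> (int \<Rightarrow> int \<Rightarrow> 'v set) \<Rightarrow> bool" where
  "nondegenerate sc FV \<longleftrightarrow>
     (\<forall>p n. vector_space.dim sc (FV (p + 1) n) \<le> vector_space.dim sc (FV p n) + 1)"

definition level :: "(int \<Rightarrow> int \<Rightarrow> 'v set) \<Rightarrow> int \<Rightarrow> 'v \<Rightarrow> int" where
  "level FV n v = (LEAST p. v \<in> FV p n)"

definition adapted_basis ::
  "('a::field \<Rightarrow> 'v::ab_group_add \<Rightarrow> 'v) \<Rightarrow> (int \<Rightarrow> int \<Rightarrow> 'v set) \<Rightarrow> nat \<Rightarrow>
   (nat \<Rightarrow> int) \<Rightarrow> (nat \<Rightarrow> 'v) \<Rightarrow> bool" where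
  "adapted_basis sc FV m deg b \<longleftrightarrow>
     \<comment> \<open>basis of V\<close>
     inj_on b {..<m} \<and>
     \<not> module.dependent sc (b ` {..<m}) \<and>
     module.span sc (b ` {..<m}) = total_space sc FV \<and>
     \<comment> \<open>(i) pure degree\<close>
     (\<forall>i<m. b i \<in> colim FV (deg i)) \<and>
     \<comment> \<open>(ii) filtration spanned by basis elements\<close>
     (\<forall>n p. FV p n = module.span sc
        (b ` {i. i < m \<and> deg i = n \<and> level FV n (b i) \<le> p})) \<and>
     \<comment> \<open>(iii) ordering\<close>
     (\<forall>i j. i \<le> j \<longrightarrow> j < m \<longrightarrow>
        deg i \<le> deg j \<and> (deg i = deg j \<longrightarrow> level FV (deg i) (b i) \<le> level FV (deg j) (b j)))"

end

theory Submission
  imports Defs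
begin

text \<open>Take the standard basis vectors \<open>e\<^sub>0, \<dots>, e\<^sub>m\<^sub>-\<^sub>1\<close> of the ambient space, put \<open>e\<^sub>i\<close>
  in degree \<open>blk i\<close> and filtration level \<open>i\<close>, and let the boundary act by \<open>D\<close>.
  Every level adds a single basis vector, so the filtration is nondegenerate, and the
  standard basis is adapted because \<open>blk\<close> is monotone.  If \<open>D a c \<noteq> 0\<close> then
  \<open>blk c = blk a + 1\<close>, which by monotonicity forces \<open>a < c\<close>: the boundary lowers the degree
  by one and does not raise the level, so each filtration stage is a subcomplex.\<close>

interpretation V: vector_space "fscale :: 'a::field \<Rightarrow> (nat \<Rightarrow> 'a) \<Rightarrow> _"
  by (rule vector_space_fscale)

lemma sum_fun_apply: "(\<Sum>a\<in>A. (f a :: 'c \<Rightarrow> 'b::comm_monoid_add)) x = (\<Sum>a\<in>A. f a x)"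
  by (induction A rule: infinite_finite_induct) auto

definition unit_vec :: "nat \<Rightarrow> nat \<Rightarrow> 'a::field" where
  "unit_vec i = (\<lambda>a. if a = i then 1 else 0)"

definition supported_on :: "nat set \<Rightarrow> (nat \<Rightarrow> 'a::field) set" where
  "supported_on S = {x. \<forall>a. x a \<noteq> 0 \<longrightarrow> a \<in> S}"

lemma subspace_supported_on: "V.subspace (supported_on S)"
  unfolding V.subspace_def supported_on_def fscale_def
  by (auto simp: plus_fun_def) (metis add.left_neutral)

lemma supported_on_empty: "supported_on {} = {0}"
  by (auto simp: supported_on_def fun_eq_iff)

lemma unit_vec_in_supported_on_iff: "unit_vec i \<in> supported_on S \<longleftrightarrow> i \<in> S"
  by (auto simp: unit_vec_def supported_on_def)

lemma unit_vec_apply: "unit_vec i a = (if a = i then 1 else 0)"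
  by (simp add: unit_vec_def)

lemma inj_unit_vec: "inj (unit_vec :: nat \<Rightarrow> nat \<Rightarrow> 'a::field)"
  by (auto simp: inj_on_def unit_vec_def fun_eq_iff)

lemma sum_scaled_unit_vec_apply:
  assumes "finite S"
  shows "(\<Sum>i\<in>S. fscale (c i) (unit_vec i)) a = (if a \<in> S then c a else 0)"
proof -
  have "(\<Sum>i\<in>S. fscale (c i) (unit_vec i)) a = (\<Sum>i\<in>S. if i = a then c i else 0)"
    unfolding sum_fun_apply by (auto simp: fscale_def unit_vec_def intro!: sum.cong)
  then show ?thesis
    using assms by (simp add: sum.delta')
qed

lemma span_unit_vec:
  assumes "finite S"
  shows "V.span (unit_vec ` S :: (nat \<Rightarrow> 'a::field) set) = supported_on S"
proof
  show "V.span (unit_vec ` S) \<subseteq> supported_on S"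
    by (rule V.span_minimal) (auto simp: unit_vec_in_supported_on_iff subspace_supported_on)
  show "supported_on S \<subseteq> V.span (unit_vec ` S :: (nat \<Rightarrow> 'a::field) set)"
  proof
    fix x :: "nat \<Rightarrow> 'a"
    assume "x \<in> supported_on S"
    then have "x = (\<Sum>i\<in>S. fscale (x i) (unit_vec i))"
      using assms by (auto simp: sum_scaled_unit_vec_apply supported_on_def fun_eq_iff)
    also have "\<dots> \<in> V.span (unit_vec ` S)"
      by (intro V.span_sum V.span_scale V.span_base) auto
    finally show "x \<in> V.span (unit_vec ` S)" .
  qed
qed

lemma unit_vec_eq_iff [simp]: "unit_vec i = unit_vec j \<longleftrightarrow> i = j"
  by (rule inj_eq[OF inj_unit_vec])

lemma independent_unit_vec: "\<not> V.dependent (unit_vec ` S :: (nat \<Rightarrow> 'a::field) set)"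
proof (unfold V.independent_explicit_finite_subsets, clarify)
  fix T and u :: "(nat \<Rightarrow> 'a) \<Rightarrow> 'a" and v
  assume T: "T \<subseteq> unit_vec ` S" "finite T" and sum0: "(\<Sum>w\<in>T. fscale (u w) w) = 0" and "v \<in> T"
  then obtain i where i: "v = unit_vec i"
    by blast
  have "0 = (\<Sum>w\<in>T. fscale (u w) w) i"
    using sum0 by simp
  also have "\<dots> = (\<Sum>w\<in>T. if w = v then u w else 0)"
    unfolding sum_fun_apply
  proof (intro sum.cong refl)
    fix w
    assume "w \<in> T"
    with T(1) obtain j where "w = unit_vec j"
      by blast
    then show "fscale (u w) w i = (if w = v then u w else 0)"
      using i by (simp add: fscale_def unit_vec_apply)
  qed
  also have "\<dots> = u v"
    using T(2) \<open>v \<in> T\<close> by (simp add: sum.delta')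
  finally show "u v = 0"
    by simp
qed

lemma dim_supported_on: "finite S \<Longrightarrow> V.dim (supported_on S :: (nat \<Rightarrow> 'a::field) set) = card S"
  by (simp flip: span_unit_vec add: V.dim_span V.dim_eq_card_independent[OF independent_unit_vec]
      card_image[OF inj_on_subset[OF inj_unit_vec subset_UNIV]])

lemma sum_supported_on_disjoint_eq_zero:
  assumes "finite N" and "\<And>n. n \<in> N \<Longrightarrow> x n \<in> supported_on (S n)"
    and "\<And>n n'. n \<noteq> n' \<Longrightarrow> S n \<inter> S n' = {}"
    and "(\<Sum>n\<in>N. x n) = 0" and "n \<in> N"
  shows "x n = 0"
proof
  fix a
  show "x n a = 0 a"
  proof (cases "a \<in> S n")
    case False
    then show ?thesis
      using assms(2,5) by (auto simp: supported_on_def)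
  next
    case True
    have "0 = (\<Sum>n\<in>N. x n) a"
      using assms(4) by simp
    also have "\<dots> = (\<Sum>n'\<in>N. if n' = n then x n' a else 0)"
      unfolding sum_fun_apply using assms(2,3) True by (intro sum.cong) (auto simp: supported_on_def, blast)
    also have "\<dots> = x n a"
      using assms(1,5) by (simp add: sum.delta')
    finally show ?thesis
      by simp
  qed
qed

definition mat_act :: "(nat \<Rightarrow> nat \<Rightarrow> 'a::field) \<Rightarrow> nat \<Rightarrow> (nat \<Rightarrow> 'a) \<Rightarrow> nat \<Rightarrow> 'a" where
  "mat_act D m x = (\<lambda>a. if a < m then \<Sum>c<m. D a c * x c else 0)"

lemma mat_act_add: "mat_act D m (x + y) = mat_act D m x + mat_act D m y"
  by (auto simp: mat_act_def fun_eq_iff algebra_simps sum.distrib)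

lemma mat_act_fscale: "mat_act D m (fscale c x) = fscale c (mat_act D m x)"
  by (auto simp: mat_act_def fun_eq_iff fscale_def sum_distrib_left algebra_simps)

lemma mat_act_zero: "mat_act D m 0 = 0"
  by (simp add: mat_act_def fun_eq_iff)

lemma mat_act_unit_vec:
  assumes "j < m"
  shows "mat_act D m (unit_vec j) = (\<Sum>i<m. fscale (D i j) (unit_vec i))"
proof
  fix a
  have "(\<Sum>c<m. D a c * unit_vec j c) = D a j"
    using assms by (simp add: unit_vec_def if_distrib cong: if_cong)
  then show "mat_act D m (unit_vec j) a = (\<Sum>i<m. fscale (D i j) (unit_vec i)) a"
    by (simp add: mat_act_def sum_scaled_unit_vec_apply)
qed

lemma mat_act_mat_act_eq_zero:
  assumes "\<And>a c. a < m \<Longrightarrow> c < m \<Longrightarrow> (\<Sum>b<m. D a b * D b c) = 0"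
  shows "mat_act D m (mat_act D m x) = 0"
proof
  fix a
  show "mat_act D m (mat_act D m x) a = 0 a"
  proof (cases "a < m")
    case True
    have "(\<Sum>b<m. D a b * (\<Sum>c<m. D b c * x c)) = (\<Sum>b<m. \<Sum>c<m. D a b * D b c * x c)"
      by (simp add: sum_distrib_left mult.assoc)
    also have "\<dots> = (\<Sum>c<m. (\<Sum>b<m. D a b * D b c) * x c)"
      by (subst sum.swap) (simp add: sum_distrib_right)
    also have "\<dots> = 0"
      using assms True by simp
    finally show ?thesis
      using True by (simp add: mat_act_def)
  qed (simp add: mat_act_def)
qed

locale block_superdiagonal =
  fixes D :: "nat \<Rightarrow> nat \<Rightarrow> 'a::field" and m :: nat and blk :: "nat \<Rightarrow> nat"
  assumes differential: "\<And>a c. a < m \<Longrightarrow> c < m \<Longrightarrow> (\<Sum>b<m. D a b * D b c) = 0"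
    and blk_mono: "\<And>i j. i \<le> j \<Longrightarrow> j < m \<Longrightarrow> blk i \<le> blk j"
    and superdiag: "\<And>a b. a < m \<Longrightarrow> b < m \<Longrightarrow> blk b \<noteq> blk a + 1 \<Longrightarrow> D a b = 0"
begin

definition cells :: "int \<Rightarrow> int \<Rightarrow> nat set" where
  "cells p n = {i. i < m \<and> int (blk i) = n \<and> int i \<le> p}"

definition filtration :: "int \<Rightarrow> int \<Rightarrow> (nat \<Rightarrow> 'a) set" where
  "filtration p n = supported_on (cells p n)"

definition boundary :: "int \<Rightarrow> (nat \<Rightarrow> 'a) \<Rightarrow> nat \<Rightarrow> 'a" where
  "boundary n = mat_act D m"

lemma finite_cells: "finite (cells p n)"
  by (simp add: cells_def)

lemma filtration_eq_span: "filtration p n = V.span (unit_vec ` cells p n)"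
  by (simp add: filtration_def span_unit_vec finite_cells)

lemma level_unit_vec: "i < m \<Longrightarrow> level filtration (int (blk i)) (unit_vec i) = int i"
  unfolding level_def filtration_def unit_vec_in_supported_on_iff cells_def
  by (rule Least_equality) auto

lemma nonzero_entry_index_less:
  assumes "a < m" "c < m" "D a c \<noteq> 0"
  shows "blk c = blk a + 1" "a < c"
proof -
  show c: "blk c = blk a + 1"
    using superdiag assms by blast
  show "a < c"
    using blk_mono[of c a] assms(1) c by linarith
qed

lemma boundary_maps_filtration:
  assumes "x \<in> filtration p n"
  shows "boundary n x \<in> filtration p (n - 1)"
  unfolding filtration_def supported_on_def
proof (intro CollectI allI impI)
  fix a
  assume nz: "boundary n x a \<noteq> 0"
  then have a: "a < m"
    by (auto simp: boundary_def mat_act_def split: if_splits)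
  with nz have "(\<Sum>c<m. D a c * x c) \<noteq> 0"
    by (simp add: boundary_def mat_act_def)
  then obtain c where c: "c < m" "D a c * x c \<noteq> 0"
    by (meson lessThan_iff sum.neutral)
  then have "c \<in> cells p n"
    using assms by (auto simp: filtration_def supported_on_def)
  with nonzero_entry_index_less[of a c] a c show "a \<in> cells p (n - 1)"
    by (auto simp: cells_def)
qed

lemma cells_empty: "n \<notin> (\<lambda>i. int (blk i)) ` {..<m} \<Longrightarrow> cells p n = {}"
  by (auto simp: cells_def)

lemma finite_nonbij_degrees: "finite {n. \<not> bij_betw (boundary n) (filtration p n) (filtration p (n - 1))}"
proof (rule finite_subset)
  let ?degs = "(\<lambda>i. int (blk i)) ` {..<m}"
  show "{n. \<not> bij_betw (boundary n) (filtration p n) (filtration p (n - 1))}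
      \<subseteq> ?degs \<union> (\<lambda>n. n + 1) ` ?degs"
  proof (rule subsetI, rule ccontr)
    fix n
    assume n: "n \<notin> ?degs \<union> (\<lambda>n. n + 1) ` ?degs"
    have "n - 1 \<notin> ?degs"
    proof
      assume "n - 1 \<in> ?degs"
      then have "n \<in> (\<lambda>n. n + 1) ` ?degs"
        by (rule rev_image_eqI) simp
      with n show False
        by blast
    qed
    with n have "filtration p n = {0}" "filtration p (n - 1) = {0}"
      by (simp_all add: filtration_def cells_empty supported_on_empty)
    moreover assume "n \<in> {n. \<not> bij_betw (boundary n) (filtration p n) (filtration p (n - 1))}"
    ultimately show False
      by (simp add: bij_betw_def boundary_def mat_act_zero)
  qed
qed simp

lemma boundary_unit_vec: "j < m \<Longrightarrow> boundary n (unit_vec j) = (\<Sum>i<m. fscale (D i j) (unit_vec i))"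
  by (simp add: boundary_def mat_act_unit_vec)

lemma is_complex_filtration: "is_complex fscale (filtration p) boundary"
  unfolding is_complex_def
proof (intro conjI allI ballI)
  fix n
  show "V.subspace (filtration p n)"
    by (simp add: filtration_def subspace_supported_on)
  show "\<exists>B. finite B \<and> B \<subseteq> filtration p n \<and> V.span B = filtration p n"
    by (intro exI[of _ "unit_vec ` cells p n"]) (auto simp: filtration_eq_span finite_cells V.span_base)
qed (simp_all add: boundary_maps_filtration finite_nonbij_degrees,
     simp_all add: boundary_def mat_act_add mat_act_fscale mat_act_mat_act_eq_zero[OF differential])

lemma colim_filtration: "colim filtration n = supported_on {i. i < m \<and> int (blk i) = n}"
proof
  show "colim filtration n \<subseteq> supported_on {i. i < m \<and> int (blk i) = n}"
    by (auto simp: colim_def filtration_def supported_on_def cells_def)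
  have "supported_on {i. i < m \<and> int (blk i) = n} = filtration (int m) n"
    by (auto simp: filtration_def cells_def intro!: arg_cong[where f = supported_on])
  then show "supported_on {i. i < m \<and> int (blk i) = n} \<subseteq> colim filtration n"
    by (auto simp: colim_def)
qed

lemma filtered_complex_filtration: "filtered_complex fscale filtration boundary"
  unfolding filtered_complex_def
proof (intro conjI allI impI)
  show "filtration p n \<subseteq> filtration (p + 1) n" for p n
    by (auto simp: filtration_def supported_on_def cells_def)
  have "cells p n = {}" if "p < 0" for p n
    using that by (auto simp: cells_def)
  then show "\<exists>p0. \<forall>p\<le>p0. \<forall>n. filtration p n = {0}"
    by (intro exI[of _ "-1"] allI impI) (simp add: filtration_def supported_on_empty)
  have "{p. filtration p \<noteq> filtration (p + 1)} \<subseteq> (\<lambda>i. int i - 1) ` {..<m}"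
  proof
    fix p
    assume "p \<in> {p. filtration p \<noteq> filtration (p + 1)}"
    then obtain n where "filtration p n \<noteq> filtration (p + 1) n"
      by (meson ext mem_Collect_eq)
    then have "cells p n \<noteq> cells (p + 1) n"
      by (metis filtration_def)
    moreover have "cells p n \<subseteq> cells (p + 1) n"
      by (auto simp: cells_def)
    ultimately obtain i where "i \<in> cells (p + 1) n - cells p n"
      by (metis psubsetI psubset_imp_ex_mem)
    then have "i < m" "int i = p + 1"
      by (auto simp: cells_def)
    then show "p \<in> (\<lambda>i. int i - 1) ` {..<m}"
      by force
  qed
  then show "finite {p. filtration p \<noteq> filtration (p + 1)}"
    by (rule finite_subset) simp
next
  fix N :: "int set" and x :: "int \<Rightarrow> nat \<Rightarrow> 'a"
  assume "finite N" "\<forall>n\<in>N. x n \<in> colim filtration n" "(\<Sum>n\<in>N. x n) = 0"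
  then show "\<forall>n\<in>N. x n = 0"
    unfolding colim_filtration
    by (intro ballI sum_supported_on_disjoint_eq_zero[where S = "\<lambda>n. {i. i < m \<and> int (blk i) = n}"])
      auto
qed (simp add: is_complex_filtration)

lemma nondegenerate_filtration: "nondegenerate fscale filtration"
  unfolding nondegenerate_def
proof (intro allI)
  fix p n
  have "cells (p + 1) n \<subseteq> insert (nat (p + 1)) (cells p n)"
    by (auto simp: cells_def)
  then have "card (cells (p + 1) n) \<le> card (insert (nat (p + 1)) (cells p n))"
    by (simp add: card_mono finite_cells)
  also have "\<dots> \<le> card (cells p n) + 1"
    by (simp add: card_insert_if finite_cells)
  finally have "card (cells (p + 1) n) \<le> card (cells p n) + 1" .
  then show "V.dim (filtration (p + 1) n) \<le> V.dim (filtration p n) + 1"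
    by (simp add: filtration_def dim_supported_on finite_cells)
qed

lemma adapted_basis_unit_vec: "adapted_basis fscale filtration m (\<lambda>i. int (blk i)) unit_vec"
  unfolding adapted_basis_def
proof (intro conjI allI impI)
  show "inj_on unit_vec {..<m}"
    using inj_unit_vec by (rule inj_on_subset) simp
  show "\<not> V.dependent (unit_vec ` {..<m})"
    by (rule independent_unit_vec)
  show "unit_vec i \<in> colim filtration (int (blk i))" if "i < m" for i
    using that by (simp add: colim_filtration unit_vec_in_supported_on_iff)
  have "unit_vec ` {..<m} \<subseteq> (\<Union>n. colim filtration n)"
    by (auto simp: colim_filtration unit_vec_in_supported_on_iff)
  moreover have "(\<Union>n. colim filtration n) \<subseteq> V.span (unit_vec ` {..<m})"
    by (auto simp: colim_filtration span_unit_vec supported_on_def)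
  ultimately show "V.span (unit_vec ` {..<m}) = total_space fscale filtration"
    unfolding total_space_def V.span_eq by (meson V.span_superset order_trans)
  show "filtration p n = V.span (unit_vec ` {i. i < m \<and> int (blk i) = n \<and> level filtration n (unit_vec i) \<le> p})"
    for n p
  proof -
    have "{i. i < m \<and> int (blk i) = n \<and> level filtration n (unit_vec i) \<le> p} = cells p n"
      using level_unit_vec by (auto simp: cells_def)
    then show ?thesis
      by (simp add: filtration_eq_span)
  qed
  show "int (blk i) \<le> int (blk j)" if "i \<le> j" "j < m" for i j
    using blk_mono that by simp
  show "level filtration (int (blk i)) (unit_vec i) \<le> level filtration (int (blk j)) (unit_vec j)"
    if "i \<le> j" "j < m" for i j
    using that by (simp add: level_unit_vec)
qed

end

theorem lemma4p8:
  fixes D :: "nat \<Rightarrow> nat \<Rightarrow> 'a::field" and m k :: nat and blk :: "nat \<Rightarrow> nat"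
  assumes differential: "\<forall>a<m. \<forall>c<m. (\<Sum>b<m. D a b * D b c) = 0"
    and blk_range: "\<forall>i<m. 1 \<le> blk i \<and> blk i \<le> k"
    and blk_mono: "\<forall>i j. i \<le> j \<longrightarrow> j < m \<longrightarrow> blk i \<le> blk j"
    and blk_nonempty: "\<forall>j\<in>{1..k}. \<exists>i<m. blk i = j"
    and superdiag: "\<forall>a<m. \<forall>b<m. blk b \<noteq> blk a + 1 \<longrightarrow> D a b = 0"
  shows "\<exists>(FV :: int \<Rightarrow> int \<Rightarrow> (nat \<Rightarrow> 'a) set) d b.
           filtered_complex fscale FV d \<and> nondegenerate fscale FV \<and>
           adapted_basis fscale FV m (\<lambda>i. int (blk i)) b \<and>
           (\<forall>j<m. d (int (blk j)) (b j) = (\<Sum>i<m. fscale (D i j) (b i)))"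
proof -
  interpret block_superdiagonal D m blk
    using differential blk_mono superdiag by unfold_locales blast+
  show ?thesis
    using filtered_complex_filtration nondegenerate_filtration adapted_basis_unit_vec boundary_unit_vec
    by blast
qed

end
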